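(* Let $g(x)\in\mathbb{Z}[x]$ and let $\{R_i\}_{i\in I}$ be a family of rings. Then $\prod_{i\in I}R_i$ is weakly $g(x)$-$r$-clean if and only if every $R_i$ is weakly $g(x)$-$r$-clean and at most one $R_i$ is not $g(x)$-$r$-clean.
   Context: Rings are associative with identity; an integer polynomial $g(x)$ is evaluated in any ring via the canonical map $\mathbb{Z}\to R$. $Reg(R)=\{r\in R: r=ryr \text{ for some } y\in R\}$. A ring $R$ is $g(x)$-$r$-clean if every $x\in R$ can be written $x=r+s$ with $r\in Reg(R)$ and $g(s)=0$. An element $x\in R$ is weakly $g(x)$-$r$-clean if $x=r+s$ or $x=r-s$ with $r\in Reg(R)$ and $g(s)=0$; $R$ is weakly $g(x)$-$r$-clean if all its elements are. *)

theory Defs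
  imports "HOL-Algebra.Ring" "HOL-Computational_Algebra.Polynomial"
begin

text \<open>Evaluation of an integer polynomial g in a ring R via the canonical map Z -> R:
  g(s) = sum_k (coeff g k) . s^k, where the integer multiple is the additive (int) power.\<close>
definition poly_eval_int :: "('a, 'b) ring_scheme \<Rightarrow> int poly \<Rightarrow> 'a \<Rightarrow> 'a" where
  "poly_eval_int R g s = (\<Oplus>\<^bsub>R\<^esub> k \<in> {..degree g}. add_pow R (coeff g k) (s [^]\<^bsub>R\<^esub> k))"

definition Reg :: "('a, 'b) ring_scheme \<Rightarrow> 'a set" where
  "Reg R = {r \<in> carrier R. \<exists>y \<in> carrier R. r = r \<otimes>\<^bsub>R\<^esub> y \<otimes>\<^bsub>R\<^esub> r}"

definition g_r_clean :: "int poly \<Rightarrow> ('a, 'b) ring_scheme \<Rightarrow> bool" where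
  "g_r_clean g R \<longleftrightarrow> (\<forall>x \<in> carrier R. \<exists>r \<in> Reg R. \<exists>s \<in> carrier R.
      poly_eval_int R g s = \<zero>\<^bsub>R\<^esub> \<and> x = r \<oplus>\<^bsub>R\<^esub> s)"

definition weakly_g_r_clean_elem :: "int poly \<Rightarrow> ('a, 'b) ring_scheme \<Rightarrow> 'a \<Rightarrow> bool" where
  "weakly_g_r_clean_elem g R x \<longleftrightarrow> (\<exists>r \<in> Reg R. \<exists>s \<in> carrier R.
      poly_eval_int R g s = \<zero>\<^bsub>R\<^esub> \<and> (x = r \<oplus>\<^bsub>R\<^esub> s \<or> x = r \<ominus>\<^bsub>R\<^esub> s))"

definition weakly_g_r_clean :: "int poly \<Rightarrow> ('a, 'b) ring_scheme \<Rightarrow> bool" where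
  "weakly_g_r_clean g R \<longleftrightarrow> (\<forall>x \<in> carrier R. weakly_g_r_clean_elem g R x)"

definition PiR :: "'i set \<Rightarrow> ('i \<Rightarrow> ('a, 'b) ring_scheme) \<Rightarrow> ('i \<Rightarrow> 'a) ring" where
  "PiR I R = \<lparr> carrier = PiE I (\<lambda>i. carrier (R i)),
               monoid.mult = (\<lambda>x y. \<lambda>i\<in>I. x i \<otimes>\<^bsub>R i\<^esub> y i),
               one = (\<lambda>i\<in>I. \<one>\<^bsub>R i\<^esub>),
               zero = (\<lambda>i\<in>I. \<zero>\<^bsub>R i\<^esub>),
               add = (\<lambda>x y. \<lambda>i\<in>I. x i \<oplus>\<^bsub>R i\<^esub> y i) \<rparr>"

end

theory Submission
  imports Defs "HOL-Algebra.UnivPoly"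
begin

(* Both kinds of decomposition, x = r + s and x = r - s, are componentwise in a product, because
   Reg, the roots of g and the ring operations are. So the product is weakly g(x)-r-clean iff every
   element has either all its components of the first kind or all of the second kind. As x = r - s
   exactly when -x = (-r) + s, and Reg is closed under negation, in a g(x)-r-clean ring every element
   is of both kinds: one exceptional factor is harmless. Two non-clean factors i and j, witnessed by
   a and b, are not: the element with components a at i and -b at j admits neither uniform choice. *)

lemma Reg_carrier: "r \<in> Reg R \<Longrightarrow> r \<in> carrier R"
  by (simp add: Reg_def)

lemma (in ring) a_inv_Reg:
  assumes "r \<in> Reg R"
  shows "\<ominus> r \<in> Reg R"
proof -
  obtain y where r: "r \<in> carrier R" and y: "y \<in> carrier R" and e: "r = r \<otimes> y \<otimes> r"
    using assms unfolding Reg_def by auto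
  have "\<ominus> r = \<ominus> r \<otimes> \<ominus> y \<otimes> \<ominus> r"
    using r y e by (simp add: l_minus r_minus)
  then show ?thesis using r y unfolding Reg_def by auto
qed

lemma (in ring) poly_eval_int_closed:
  "s \<in> carrier R \<Longrightarrow> poly_eval_int R g s \<in> carrier R"
  unfolding poly_eval_int_def by (auto intro: finsum_closed add.int_pow_closed)

lemma (in ring_hom_ring) hom_poly_eval_int:
  assumes s: "s \<in> carrier R"
  shows "h (poly_eval_int R g s) = poly_eval_int S g (h s)"
proof -
  have "h (add_pow R k x) = add_pow S k (h x)" if "x \<in> carrier R" for k :: int and x
    using group_hom.hom_int_pow[OF a_group_hom] that by (simp add: add_pow_def)
  then show ?thesis
    unfolding poly_eval_int_def using s
    by (subst hom_finsum) (auto simp: hom_nat_pow intro!: S.finsum_cong')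
qed

definition g_r_clean_elem :: "int poly \<Rightarrow> ('a, 'b) ring_scheme \<Rightarrow> 'a \<Rightarrow> bool" where
  "g_r_clean_elem g R x \<longleftrightarrow> (\<exists>r \<in> Reg R. \<exists>s \<in> carrier R.
      poly_eval_int R g s = \<zero>\<^bsub>R\<^esub> \<and> x = r \<oplus>\<^bsub>R\<^esub> s)"

definition g_r_clean_minus_elem :: "int poly \<Rightarrow> ('a, 'b) ring_scheme \<Rightarrow> 'a \<Rightarrow> bool" where
  "g_r_clean_minus_elem g R x \<longleftrightarrow> (\<exists>r \<in> Reg R. \<exists>s \<in> carrier R.
      poly_eval_int R g s = \<zero>\<^bsub>R\<^esub> \<and> x = r \<ominus>\<^bsub>R\<^esub> s)"

lemma g_r_clean_iff_elem: "g_r_clean g R \<longleftrightarrow> (\<forall>x \<in> carrier R. g_r_clean_elem g R x)"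
  by (simp add: g_r_clean_def g_r_clean_elem_def)

lemma weakly_g_r_clean_elem_iff:
  "weakly_g_r_clean_elem g R x \<longleftrightarrow> g_r_clean_elem g R x \<or> g_r_clean_minus_elem g R x"
  unfolding weakly_g_r_clean_elem_def g_r_clean_elem_def g_r_clean_minus_elem_def by blast

lemma (in ring) g_r_clean_elem_carrier:
  "g_r_clean_elem g R x \<Longrightarrow> x \<in> carrier R"
  by (auto simp: g_r_clean_elem_def dest: Reg_carrier)

lemma (in ring) g_r_clean_minus_elem_carrier:
  "g_r_clean_minus_elem g R x \<Longrightarrow> x \<in> carrier R"
  by (auto simp: g_r_clean_minus_elem_def dest: Reg_carrier)

lemma (in ring) g_r_clean_minus_elem_iff_a_inv:
  assumes x: "x \<in> carrier R"
  shows "g_r_clean_minus_elem g R x \<longleftrightarrow> g_r_clean_elem g R (\<ominus> x)"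
proof
  assume "g_r_clean_minus_elem g R x"
  then obtain r s where "r \<in> Reg R" "s \<in> carrier R" "poly_eval_int R g s = \<zero>" "x = r \<ominus> s"
    by (auto simp: g_r_clean_minus_elem_def)
  moreover from this have "\<ominus> x = \<ominus> r \<oplus> s"
    by (simp add: Reg_carrier a_minus_def minus_add)
  ultimately show "g_r_clean_elem g R (\<ominus> x)"
    using a_inv_Reg by (auto simp: g_r_clean_elem_def)
next
  assume "g_r_clean_elem g R (\<ominus> x)"
  then obtain r s where "r \<in> Reg R" "s \<in> carrier R" "poly_eval_int R g s = \<zero>" "\<ominus> x = r \<oplus> s"
    by (auto simp: g_r_clean_elem_def)
  moreover from this have "x = \<ominus> r \<ominus> s"
    using Reg_carrier x by (metis a_minus_def add.inv_closed minus_add minus_minus)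
  ultimately show "g_r_clean_minus_elem g R x"
    using a_inv_Reg by (auto simp: g_r_clean_minus_elem_def)
qed

lemma (in ring) g_r_clean_minus_elem_if_g_r_clean:
  assumes "g_r_clean g R" "x \<in> carrier R"
  shows "g_r_clean_minus_elem g R x"
  using assms by (simp add: g_r_clean_minus_elem_iff_a_inv g_r_clean_iff_elem)

lemma PiR_simps [simp]:
  "carrier (PiR I R) = PiE I (\<lambda>i. carrier (R i))"
  "x \<otimes>\<^bsub>PiR I R\<^esub> y = (\<lambda>i\<in>I. x i \<otimes>\<^bsub>R i\<^esub> y i)"
  "\<one>\<^bsub>PiR I R\<^esub> = (\<lambda>i\<in>I. \<one>\<^bsub>R i\<^esub>)"
  "\<zero>\<^bsub>PiR I R\<^esub> = (\<lambda>i\<in>I. \<zero>\<^bsub>R i\<^esub>)"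
  "x \<oplus>\<^bsub>PiR I R\<^esub> y = (\<lambda>i\<in>I. x i \<oplus>\<^bsub>R i\<^esub> y i)"
  by (simp_all add: PiR_def)

lemma ring_PiR:
  assumes "\<forall>i \<in> I. ring (R i)"
  shows "ring (PiR I R)"
proof (rule ringI)
  show "abelian_group (PiR I R)"
  proof (rule abelian_groupI)
    fix x assume x: "x \<in> carrier (PiR I R)"
    show "\<exists>y \<in> carrier (PiR I R). y \<oplus>\<^bsub>PiR I R\<^esub> x = \<zero>\<^bsub>PiR I R\<^esub>"
      by (rule bexI[where x="\<lambda>i\<in>I. \<ominus>\<^bsub>R i\<^esub> x i"])
        (use x assms in \<open>auto simp: PiE_iff ring.ring_simprules\<close>)
  qed (use assms in \<open>auto simp: PiE_iff ring.ring_simprules fun_eq_iff extensional_def\<close>)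
  have "\<forall>i \<in> I. monoid (R i)"
    using assms ring.is_monoid by blast
  then show "monoid (PiR I R)"
    by (intro monoidI)
      (use assms monoid.r_one monoid.l_one
        in \<open>auto simp: PiE_iff ring.ring_simprules fun_eq_iff extensional_def\<close>)
qed (use assms in \<open>auto simp: PiE_iff ring.ring_simprules fun_eq_iff extensional_def\<close>)

lemma ring_hom_ring_PiR_proj:
  assumes "\<forall>i \<in> I. ring (R i)" "i \<in> I"
  shows "ring_hom_ring (PiR I R) (R i) (\<lambda>x. x i)"
  by (rule ring_hom_ringI) (use assms ring_PiR[OF assms(1)] in auto)

lemma
  assumes R: "\<forall>i \<in> I. ring (R i)" and i: "i \<in> I" and x: "x \<in> carrier (PiR I R)"
  shows PiR_a_inv_apply: "(\<ominus>\<^bsub>PiR I R\<^esub> x) i = \<ominus>\<^bsub>R i\<^esub> x i"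
    and PiR_poly_eval_int_apply: "poly_eval_int (PiR I R) g x i = poly_eval_int (R i) g (x i)"
proof -
  interpret ring_hom_ring "PiR I R" "R i" "\<lambda>x. x i"
    using ring_hom_ring_PiR_proj[OF R i] .
  show "(\<ominus>\<^bsub>PiR I R\<^esub> x) i = \<ominus>\<^bsub>R i\<^esub> x i"
    using hom_a_inv[OF x] .
  show "poly_eval_int (PiR I R) g x i = poly_eval_int (R i) g (x i)"
    using hom_poly_eval_int[OF x] .
qed

lemma Reg_PiR_iff:
  "r \<in> Reg (PiR I R) \<longleftrightarrow> r \<in> carrier (PiR I R) \<and> (\<forall>i\<in>I. r i \<in> Reg (R i))"
proof
  assume "r \<in> Reg (PiR I R)"
  then obtain y where r: "r \<in> carrier (PiR I R)" and y: "y \<in> carrier (PiR I R)"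
    and e: "r = r \<otimes>\<^bsub>PiR I R\<^esub> y \<otimes>\<^bsub>PiR I R\<^esub> r" unfolding Reg_def by auto
  have "r i \<in> Reg (R i)" if i: "i \<in> I" for i
  proof -
    have "r i = r i \<otimes>\<^bsub>R i\<^esub> y i \<otimes>\<^bsub>R i\<^esub> r i"
      using fun_cong[OF e, of i] i by simp
    moreover have "r i \<in> carrier (R i)" "y i \<in> carrier (R i)"
      using r y i by auto
    ultimately show ?thesis unfolding Reg_def by blast
  qed
  with r show "r \<in> carrier (PiR I R) \<and> (\<forall>i\<in>I. r i \<in> Reg (R i))" by blast
next
  assume r: "r \<in> carrier (PiR I R) \<and> (\<forall>i\<in>I. r i \<in> Reg (R i))"
  have inner: "\<exists>y. y \<in> carrier (R i) \<and> r i \<otimes>\<^bsub>R i\<^esub> y \<otimes>\<^bsub>R i\<^esub> r i = r i" if "i \<in> I" for i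
  proof -
    have "r i \<in> Reg (R i)" using r that by blast
    then obtain y where "y \<in> carrier (R i)" "r i = r i \<otimes>\<^bsub>R i\<^esub> y \<otimes>\<^bsub>R i\<^esub> r i"
      unfolding Reg_def by blast
    from this(1) this(2)[symmetric] show ?thesis by blast
  qed
  define y where "y i = (SOME y. y \<in> carrier (R i) \<and> r i \<otimes>\<^bsub>R i\<^esub> y \<otimes>\<^bsub>R i\<^esub> r i = r i)" for i
  have y: "\<forall>i\<in>I. y i \<in> carrier (R i) \<and> r i \<otimes>\<^bsub>R i\<^esub> y i \<otimes>\<^bsub>R i\<^esub> r i = r i"
    unfolding y_def using someI_ex[OF inner] by blast
  have "r \<otimes>\<^bsub>PiR I R\<^esub> restrict y I \<otimes>\<^bsub>PiR I R\<^esub> r = r"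
    using r y by (auto simp: fun_eq_iff PiE_iff extensional_def)
  then show "r \<in> Reg (PiR I R)"
    unfolding Reg_def
    by (intro CollectI conjI bexI[where x="restrict y I"]) (use r y in auto)
qed

lemma g_r_clean_elem_PiR_iff:
  assumes R: "\<forall>i \<in> I. ring (R i)"
  shows "g_r_clean_elem g (PiR I R) x \<longleftrightarrow>
         x \<in> carrier (PiR I R) \<and> (\<forall>i\<in>I. g_r_clean_elem g (R i) (x i))"
proof
  assume "g_r_clean_elem g (PiR I R) x"
  then obtain r s where r: "r \<in> Reg (PiR I R)" and s: "s \<in> carrier (PiR I R)"
    and gs: "poly_eval_int (PiR I R) g s = \<zero>\<^bsub>PiR I R\<^esub>" and x: "x = r \<oplus>\<^bsub>PiR I R\<^esub> s"
    by (auto simp: g_r_clean_elem_def)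
  have "g_r_clean_elem g (R i) (x i)" if i: "i \<in> I" for i
    unfolding g_r_clean_elem_def
  proof (intro bexI conjI)
    show "poly_eval_int (R i) g (s i) = \<zero>\<^bsub>R i\<^esub>"
      using fun_cong[OF gs, of i] PiR_poly_eval_int_apply[OF R i s] i by simp
  qed (use r s x i Reg_PiR_iff[of r I R] in auto)
  moreover have "x \<in> carrier (PiR I R)"
    using ring.g_r_clean_elem_carrier[OF ring_PiR[OF R]] \<open>g_r_clean_elem g (PiR I R) x\<close> .
  ultimately show "x \<in> carrier (PiR I R) \<and> (\<forall>i\<in>I. g_r_clean_elem g (R i) (x i))" by blast
next
  assume x: "x \<in> carrier (PiR I R) \<and> (\<forall>i\<in>I. g_r_clean_elem g (R i) (x i))"
  then obtain r s where rs: "\<forall>i\<in>I. r i \<in> Reg (R i) \<and> s i \<in> carrier (R i) \<and>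
      poly_eval_int (R i) g (s i) = \<zero>\<^bsub>R i\<^esub> \<and> x i = r i \<oplus>\<^bsub>R i\<^esub> s i"
    unfolding g_r_clean_elem_def by metis
  have r: "restrict r I \<in> Reg (PiR I R)"
    using rs by (auto simp: Reg_PiR_iff Reg_carrier)
  have s: "restrict s I \<in> carrier (PiR I R)"
    using rs by auto
  interpret PiR: ring "PiR I R" using ring_PiR[OF R] .
  have "poly_eval_int (PiR I R) g (restrict s I) = \<zero>\<^bsub>PiR I R\<^esub>"
    by (rule PiE_ext[OF PiR.poly_eval_int_closed[OF s, unfolded PiR_simps(1)]
      PiR.zero_closed[unfolded PiR_simps(1)]])
      (use rs PiR_poly_eval_int_apply[OF R _ s] in auto)
  moreover have "x = restrict r I \<oplus>\<^bsub>PiR I R\<^esub> restrict s I"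
    using x rs by (intro PiE_ext) auto
  ultimately show "g_r_clean_elem g (PiR I R) x"
    using r s unfolding g_r_clean_elem_def by blast
qed

lemma g_r_clean_minus_elem_PiR_iff:
  assumes R: "\<forall>i \<in> I. ring (R i)"
  shows "g_r_clean_minus_elem g (PiR I R) x \<longleftrightarrow>
         x \<in> carrier (PiR I R) \<and> (\<forall>i\<in>I. g_r_clean_minus_elem g (R i) (x i))"
proof (cases "x \<in> carrier (PiR I R)")
  case True
  interpret PiR: ring "PiR I R" using ring_PiR[OF R] .
  have "g_r_clean_minus_elem g (PiR I R) x \<longleftrightarrow> g_r_clean_elem g (PiR I R) (\<ominus>\<^bsub>PiR I R\<^esub> x)"
    using PiR.g_r_clean_minus_elem_iff_a_inv[OF True] .
  also have "\<dots> \<longleftrightarrow> (\<forall>i\<in>I. g_r_clean_elem g (R i) (\<ominus>\<^bsub>R i\<^esub> x i))"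
    using PiR.add.inv_closed[OF True] PiR_a_inv_apply[OF R _ True]
    by (simp add: g_r_clean_elem_PiR_iff[OF R] del: PiR_simps)
  also have "\<dots> \<longleftrightarrow> (\<forall>i\<in>I. g_r_clean_minus_elem g (R i) (x i))"
    using True R ring.g_r_clean_minus_elem_iff_a_inv by (metis PiE_mem PiR_simps(1))
  finally show ?thesis using True by blast
next
  case False
  then show ?thesis
    using ring.g_r_clean_minus_elem_carrier[OF ring_PiR[OF R]] by blast
qed

lemma weakly_g_r_clean_elem_PiR_iff:
  assumes "\<forall>i \<in> I. ring (R i)"
  shows "weakly_g_r_clean_elem g (PiR I R) x \<longleftrightarrow> x \<in> carrier (PiR I R) \<and>
    ((\<forall>i\<in>I. g_r_clean_elem g (R i) (x i)) \<or> (\<forall>i\<in>I. g_r_clean_minus_elem g (R i) (x i)))"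
  using assms by (auto simp: weakly_g_r_clean_elem_iff g_r_clean_elem_PiR_iff
      g_r_clean_minus_elem_PiR_iff simp del: PiR_simps)

lemma weakly_g_r_clean_factor:
  assumes R: "\<forall>i \<in> I. ring (R i)" and W: "weakly_g_r_clean g (PiR I R)" and i: "i \<in> I"
  shows "weakly_g_r_clean g (R i)"
  unfolding weakly_g_r_clean_def
proof
  fix a assume a: "a \<in> carrier (R i)"
  define x where "x = (\<lambda>k\<in>I. if k = i then a else \<zero>\<^bsub>R k\<^esub>)"
  have "x \<in> carrier (PiR I R)"
    using a R by (auto simp: x_def ring.ring_simprules)
  then have "g_r_clean_elem g (R i) (x i) \<or> g_r_clean_minus_elem g (R i) (x i)"
    using W i by (auto simp: weakly_g_r_clean_def weakly_g_r_clean_elem_PiR_iff[OF R]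
        simp del: PiR_simps)
  then show "weakly_g_r_clean_elem g (R i) a"
    using i by (simp add: x_def weakly_g_r_clean_elem_iff)
qed

lemma weakly_g_r_clean_PiR_unique_non_clean:
  assumes R: "\<forall>i \<in> I. ring (R i)" and W: "weakly_g_r_clean g (PiR I R)"
    and i: "i \<in> I" "\<not> g_r_clean g (R i)" and j: "j \<in> I" "\<not> g_r_clean g (R j)"
  shows "i = j"
proof (rule ccontr)
  assume ij: "i \<noteq> j"
  interpret Rj: ring "R j" using R j by blast
  obtain a where a: "a \<in> carrier (R i)" "\<not> g_r_clean_elem g (R i) a"
    using i by (auto simp: g_r_clean_iff_elem)
  obtain b where b: "b \<in> carrier (R j)" "\<not> g_r_clean_elem g (R j) b"
    using j by (auto simp: g_r_clean_iff_elem)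
  define x where "x = (\<lambda>k\<in>I. if k = i then a else if k = j then \<ominus>\<^bsub>R j\<^esub> b else \<zero>\<^bsub>R k\<^esub>)"
  have "x \<in> carrier (PiR I R)"
    using a b R by (auto simp: x_def ring.ring_simprules)
  then have "g_r_clean_elem g (R i) (x i) \<or> g_r_clean_minus_elem g (R j) (x j)"
    using W i j by (auto simp: weakly_g_r_clean_def weakly_g_r_clean_elem_PiR_iff[OF R]
        simp del: PiR_simps)
  then have "g_r_clean_elem g (R i) a \<or> g_r_clean_minus_elem g (R j) (\<ominus>\<^bsub>R j\<^esub> b)"
    using i j ij by (simp add: x_def)
  then show False
    using a b by (simp add: Rj.g_r_clean_minus_elem_iff_a_inv)
qed

lemma weakly_g_r_clean_PiR:
  assumes R: "\<forall>i \<in> I. ring (R i)"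
    and W: "\<forall>i \<in> I. weakly_g_r_clean g (R i)"
    and clean: "\<forall>i \<in> I - {i0}. g_r_clean g (R i)"
  shows "weakly_g_r_clean g (PiR I R)"
  unfolding weakly_g_r_clean_def
proof
  fix x assume x: "x \<in> carrier (PiR I R)"
  then have xi: "x i \<in> carrier (R i)" if "i \<in> I" for i
    using that by auto
  have both: "g_r_clean_elem g (R i) (x i)" "g_r_clean_minus_elem g (R i) (x i)"
    if "i \<in> I - {i0}" for i
  proof -
    have "ring (R i)" "g_r_clean g (R i)" "x i \<in> carrier (R i)"
      using that R clean xi by auto
    then show "g_r_clean_elem g (R i) (x i)" "g_r_clean_minus_elem g (R i) (x i)"
      by (simp_all add: g_r_clean_iff_elem ring.g_r_clean_minus_elem_if_g_r_clean)
  qed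
  have "(\<forall>i\<in>I. g_r_clean_elem g (R i) (x i)) \<or> (\<forall>i\<in>I. g_r_clean_minus_elem g (R i) (x i))"
  proof (cases "i0 \<in> I")
    case True
    then have "g_r_clean_elem g (R i0) (x i0) \<or> g_r_clean_minus_elem g (R i0) (x i0)"
      using W xi by (simp add: weakly_g_r_clean_def weakly_g_r_clean_elem_iff)
    then show ?thesis using both by blast
  qed (use both in blast)
  then show "weakly_g_r_clean_elem g (PiR I R) x"
    using x by (simp add: weakly_g_r_clean_elem_PiR_iff[OF R] del: PiR_simps)
qed

theorem theorem3p3:
  fixes g :: "int poly" and I :: "'i set" and R :: "'i \<Rightarrow> ('a, 'b) ring_scheme"
  assumes "\<forall>i \<in> I. ring (R i)"
  shows "weakly_g_r_clean g (PiR I R) \<longleftrightarrow>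
           ((\<forall>i \<in> I. weakly_g_r_clean g (R i)) \<and>
            (\<forall>i \<in> I. \<forall>j \<in> I. \<not> g_r_clean g (R i) \<and> \<not> g_r_clean g (R j) \<longrightarrow> i = j))"
proof (intro iffI conjI ballI impI)
  assume W: "weakly_g_r_clean g (PiR I R)"
  show "weakly_g_r_clean g (R i)" if "i \<in> I" for i
    using weakly_g_r_clean_factor[OF assms W that] .
  show "i = j" if "i \<in> I" "j \<in> I" "\<not> g_r_clean g (R i) \<and> \<not> g_r_clean g (R j)" for i j
    using weakly_g_r_clean_PiR_unique_non_clean[OF assms W] that by blast
next
  assume H: "(\<forall>i \<in> I. weakly_g_r_clean g (R i)) \<and>
      (\<forall>i \<in> I. \<forall>j \<in> I. \<not> g_r_clean g (R i) \<and> \<not> g_r_clean g (R j) \<longrightarrow> i = j)"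
  have "\<exists>i0. \<forall>i \<in> I - {i0}. g_r_clean g (R i)"
  proof (cases "\<forall>i \<in> I. g_r_clean g (R i)")
    case False
    then obtain i0 where "i0 \<in> I" "\<not> g_r_clean g (R i0)" by blast
    with H have "\<forall>i \<in> I - {i0}. g_r_clean g (R i)" by blast
    then show ?thesis ..
  qed blast
  then obtain i0 where "\<forall>i \<in> I - {i0}. g_r_clean g (R i)" ..
  then show "weakly_g_r_clean g (PiR I R)"
    by (rule weakly_g_r_clean_PiR[OF assms conjunct1[OF H]])
qed

end
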